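(* Let $\mathcal H$ be a real Hilbert space and $\hat H\colon\operatorname{dom}(\hat H)\subset\mathcal H\to\mathcal H$ a densely defined self-adjoint linear operator. Let $\psi\in\operatorname{dom}(\hat H)\setminus\{0\}$ (not necessarily normalized) and let \[ d=\frac{2}{\|\psi\|}\big[\hat H\psi-E(\psi)\psi\big] \] be the $L^2$ gradient of $E$ on the unit sphere at $\psi/\|\psi\|$. Assume $d\neq0$ and $d\in\operatorname{dom}(\hat H)$. Then the optimal step size \[ \eta^*=\operatorname{argmin}_{\eta>0}E(\psi-\eta d) \] is given by \[ \eta^*=\frac{\|\psi\|}{E(d)-E(\psi)+\sqrt{(E(d)-E(\psi))^2+\|d\|^2}}. \]
   Context: For $\phi\in\operatorname{dom}(\hat H)\setminus\{0\}$ the energy (Rayleigh quotient) is $E(\phi)=\langle\phi,\hat H\phi\rangle/\langle\phi,\phi\rangle$, and $\|\cdot\|$ is the norm of $\mathcal H$. *)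

theory Defs
  imports "HOL-Analysis.Analysis"
begin

text \<open>A (possibly unbounded) linear operator T with domain D on a real Hilbert space
  ('a :: {real_inner, complete_space}) is modelled as a function together with its domain.\<close>

definition linear_operator_on :: "'a::real_vector set \<Rightarrow> ('a \<Rightarrow> 'a) \<Rightarrow> bool" where
  "linear_operator_on D T \<longleftrightarrow> subspace D \<and>
     (\<forall>x\<in>D. \<forall>y\<in>D. T (x + y) = T x + T y) \<and> (\<forall>c. \<forall>x\<in>D. T (c *\<^sub>R x) = c *\<^sub>R T x)"

definition densely_defined :: "'a::real_normed_vector set \<Rightarrow> bool" where
  "densely_defined D \<longleftrightarrow> closure D = UNIV"

definition adjoint_domain :: "'a::real_inner set \<Rightarrow> ('a \<Rightarrow> 'a) \<Rightarrow> 'a set" where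
  "adjoint_domain D T = {y. \<exists>z. \<forall>x\<in>D. inner (T x) y = inner x z}"

text \<open>Self-adjoint: symmetric on D and dom(T^*) = D (then T^* = T on D).\<close>
definition self_adjoint_op :: "'a::real_inner set \<Rightarrow> ('a \<Rightarrow> 'a) \<Rightarrow> bool" where
  "self_adjoint_op D T \<longleftrightarrow>
     (\<forall>x\<in>D. \<forall>y\<in>D. inner (T x) y = inner x (T y)) \<and> adjoint_domain D T = D"

definition energy :: "('a::real_inner \<Rightarrow> 'a) \<Rightarrow> 'a \<Rightarrow> real" where
  "energy T \<phi> = inner \<phi> (T \<phi>) / inner \<phi> \<phi>"

end

theory Submission
  imports Defs
begin

text \<open>The gradient d is orthogonal to \<psi> and satisfies
  \<open>\<langle>\<psi>, H d\<rangle> = \<parallel>\<psi>\<parallel> \<parallel>d\<parallel>\<^sup>2 / 2\<close>, so by symmetry of H the energy along the ray \<open>\<psi> - \<eta> d\<close>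
  is a quotient of two quadratics in \<eta> with positive denominator. Completing the square turns it
  into a constant plus a nonnegative multiple of \<open>(K \<eta> - \<parallel>\<psi>\<parallel>)\<^sup>2\<close>, with
  \<open>K = E(d) - E(\<psi>) + sqrt ((E(d) - E(\<psi>))\<^sup>2 + \<parallel>d\<parallel>\<^sup>2) > 0\<close>, whose unique minimiser is
  \<open>\<eta> = \<parallel>\<psi>\<parallel> / K\<close>.\<close>

lemma add_sqrt_square_add_pos:
  fixes c \<delta> :: real
  assumes "\<delta> > 0"
  shows "c + sqrt (c\<^sup>2 + \<delta>) > 0"
proof -
  have "sqrt (c\<^sup>2) < sqrt (c\<^sup>2 + \<delta>)"
    using assms by (intro real_sqrt_less_mono) simp
  then show ?thesis by simp
qed

lemma quadratic_quotient_complete_square: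
  fixes n \<delta> a b t :: real
  assumes n: "n > 0" and \<delta>: "\<delta> > 0"
  defines "c \<equiv> b - a"
  defines "s \<equiv> sqrt (c\<^sup>2 + \<delta>)"
  defines "K \<equiv> c + s"
  shows "(a * n\<^sup>2 - t * n * \<delta> + t\<^sup>2 * (b * \<delta>)) / (n\<^sup>2 + t\<^sup>2 * \<delta>)
           = a + (c - s) / 2 + \<delta> * (K * t - n)\<^sup>2 / (2 * K * (n\<^sup>2 + t\<^sup>2 * \<delta>))"
proof -
  have K: "K > 0"
    unfolding K_def s_def using add_sqrt_square_add_pos[OF \<delta>] .
  have den: "n\<^sup>2 + t\<^sup>2 * \<delta> > 0"
    using n \<delta> by (simp add: add_pos_nonneg)
  have "s\<^sup>2 = c\<^sup>2 + \<delta>"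
    unfolding s_def using \<delta> by simp
  then have \<delta>_eq: "\<delta> = (s - c) * K"
    unfolding K_def by (simp add: algebra_simps power2_eq_square)
  have "2 * K * (a * n\<^sup>2 - t * n * \<delta> + t\<^sup>2 * (b * \<delta>))
          = K * (2 * a + c - s) * (n\<^sup>2 + t\<^sup>2 * \<delta>) + \<delta> * (K * t - n)\<^sup>2"
    unfolding \<delta>_eq c_def K_def by (simp add: algebra_simps power2_eq_square)
  then have "a * n\<^sup>2 - t * n * \<delta> + t\<^sup>2 * (b * \<delta>)
               = (a + (c - s) / 2) * (n\<^sup>2 + t\<^sup>2 * \<delta>) + \<delta> * (K * t - n)\<^sup>2 / (2 * K)"
    using K by (simp add: field_simps)
  then show ?thesis
    using K den by (simp add: add_divide_distrib)
qed

lemma argmin_quadratic_quotient: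
  fixes n \<delta> a b :: real
  assumes n: "n > 0" and \<delta>: "\<delta> > 0"
  defines "f \<equiv> \<lambda>t. (a * n\<^sup>2 - t * n * \<delta> + t\<^sup>2 * (b * \<delta>)) / (n\<^sup>2 + t\<^sup>2 * \<delta>)"
  shows "{t. t > 0 \<and> (\<forall>t'>0. f t \<le> f t')} = {n / (b - a + sqrt ((b - a)\<^sup>2 + \<delta>))}"
proof -
  define K where "K = b - a + sqrt ((b - a)\<^sup>2 + \<delta>)"
  define m where "m = a + (b - a - sqrt ((b - a)\<^sup>2 + \<delta>)) / 2"
  define w where "w = (\<lambda>t. \<delta> * (K * t - n)\<^sup>2 / (2 * K * (n\<^sup>2 + t\<^sup>2 * \<delta>)))"
  have K: "K > 0"
    unfolding K_def using add_sqrt_square_add_pos[OF \<delta>] .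
  have f_eq: "f t = m + w t" for t
    unfolding f_def m_def w_def K_def using quadratic_quotient_complete_square[OF n \<delta>] by simp
  have den: "n\<^sup>2 + t\<^sup>2 * \<delta> > 0" for t
    using n \<delta> by (simp add: add_pos_nonneg)
  have w_nonneg: "w t \<ge> 0" for t
    unfolding w_def using den[of t] \<delta> K by simp
  have w_pos: "w t > 0" if "t \<noteq> n / K" for t
  proof -
    have "K * t \<noteq> n"
      using that K by (auto simp: field_simps)
    then show ?thesis
      unfolding w_def using den[of t] \<delta> K by simp
  qed
  have w_min: "w (n / K) = 0"
    unfolding w_def using K by simp
  have pos: "n / K > 0"
    using n K by simp
  show ?thesis
    unfolding K_def[symmetric]
  proof (intro set_eqI iffI)
    fix t assume "t \<in> {t. t > 0 \<and> (\<forall>t'>0. f t \<le> f t')}"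
    then have "w t \<le> 0"
      using pos w_min by (auto simp: f_eq)
    then show "t \<in> {n / K}"
      using w_pos by force
  qed (use pos w_nonneg w_min in \<open>auto simp: f_eq\<close>)
qed

lemma linear_operator_on_diff_scaleR:
  assumes "linear_operator_on D T" "x \<in> D" "y \<in> D"
  shows "T (x - c *\<^sub>R y) = T x - c *\<^sub>R T y"
proof -
  have "(- c) *\<^sub>R y \<in> D"
    using assms unfolding linear_operator_on_def by (blast intro: subspace_scale)
  then have "T (x + (- c) *\<^sub>R y) = T x + (- c) *\<^sub>R T y"
    using assms unfolding linear_operator_on_def by metis
  then show ?thesis by simp
qed

lemma energy_diff_scaleR_orthogonal:
  fixes T :: "'a::real_inner \<Rightarrow> 'a"
  assumes "linear_operator_on D T"
    and sym: "\<forall>u\<in>D. \<forall>v\<in>D. inner (T u) v = inner u (T v)"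
    and "x \<in> D" "y \<in> D" and orth: "inner x y = 0"
  shows "energy T (x - t *\<^sub>R y)
           = (inner x (T x) - 2 * t * inner x (T y) + t\<^sup>2 * inner y (T y))
             / (inner x x + t\<^sup>2 * inner y y)"
proof -
  have "inner (T x) y = inner x (T y)"
    using sym assms(3,4) by blast
  then have "inner (x - t *\<^sub>R y) (T x - t *\<^sub>R T y)
               = inner x (T x) - 2 * t * inner x (T y) + t\<^sup>2 * inner y (T y)"
    by (simp add: inner_diff_left inner_diff_right inner_commute[of y "T x"]
        power2_eq_square algebra_simps)
  moreover have "inner (x - t *\<^sub>R y) (x - t *\<^sub>R y) = inner x x + t\<^sup>2 * inner y y"
    using orth by (simp add: inner_diff_left inner_diff_right inner_commute[of y x]
        power2_eq_square algebra_simps)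
  ultimately show ?thesis
    unfolding energy_def linear_operator_on_diff_scaleR[OF assms(1,3,4)] by simp
qed

lemma inner_energy_gradient:
  fixes T :: "'a::real_inner \<Rightarrow> 'a"
  assumes "x \<noteq> 0" and g: "g = (2 / norm x) *\<^sub>R (T x - energy T x *\<^sub>R x)"
  shows "inner x g = 0" and "inner (T x) g = norm x / 2 * inner g g"
proof -
  have Txx: "inner x (T x) = energy T x * inner x x"
    using assms(1) by (simp add: energy_def)
  show orth: "inner x g = 0"
    unfolding g by (simp add: inner_diff_right Txx inner_commute[of x "T x"])
  have "inner g g = (2 / norm x) * inner (T x) g"
    by (subst (1) g) (simp add: inner_diff_left orth)
  then show "inner (T x) g = norm x / 2 * inner g g"
    using assms(1) by (simp add: field_simps)
qed

theorem mainTheorem3: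
  fixes D :: "'a::{real_inner, complete_space} set"
    and H :: "'a \<Rightarrow> 'a"
    and \<psi> d :: 'a
  assumes "linear_operator_on D H"
    and "densely_defined D"
    and "self_adjoint_op D H"
    and "\<psi> \<in> D" and "\<psi> \<noteq> 0"
    and "d = (2 / norm \<psi>) *\<^sub>R (H \<psi> - energy H \<psi> *\<^sub>R \<psi>)"
    and "d \<noteq> 0" and "d \<in> D"
  shows "{\<eta>::real. \<eta> > 0 \<and> (\<forall>\<eta>'>0. energy H (\<psi> - \<eta> *\<^sub>R d) \<le> energy H (\<psi> - \<eta>' *\<^sub>R d))}
         = {norm \<psi> / (energy H d - energy H \<psi>
              + sqrt ((energy H d - energy H \<psi>)\<^sup>2 + (norm d)\<^sup>2))}"
proof -
  have sym: "\<forall>u\<in>D. \<forall>v\<in>D. inner (H u) v = inner u (H v)"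
    using assms(3) unfolding self_adjoint_op_def by blast
  have orth: "inner \<psi> d = 0" and grad: "inner (H \<psi>) d = norm \<psi> / 2 * inner d d"
    using inner_energy_gradient[OF assms(5,6)] by simp_all
  have "energy H (\<psi> - \<eta> *\<^sub>R d)
          = (energy H \<psi> * (norm \<psi>)\<^sup>2 - \<eta> * norm \<psi> * (norm d)\<^sup>2 + \<eta>\<^sup>2 * (energy H d * (norm d)\<^sup>2))
            / ((norm \<psi>)\<^sup>2 + \<eta>\<^sup>2 * (norm d)\<^sup>2)" for \<eta>
    using energy_diff_scaleR_orthogonal[OF assms(1) sym assms(4,8) orth, of \<eta>] grad
      sym assms(4,5,7,8)
    by (simp add: energy_def power2_norm_eq_inner)
  then show ?thesis
    using argmin_quadratic_quotient[of "norm \<psi>" "(norm d)\<^sup>2"] assms(5,7) by simp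
qed

end
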